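(* Let $U$ be an undirected graph with $n$ vertices, diameter $d$ and maximum degree $\Delta$ satisfying $\Delta^d-1<n(\Delta-1)$. Then for any vertex $v$ and any subset $A$ of vertices with $|A|\le\Delta$, there exists a vertex $u\neq v$ with $\operatorname{dist}(u,A)>d-2$.
   Context: $\operatorname{dist}$ denotes graph distance in $U$, and for a vertex $u$ and vertex set $A$, $\operatorname{dist}(u,A)=\min\{\operatorname{dist}(u,a):a\in A\}$. *)

theory Defs
  imports Main
begin

definition simple_graph :: "'a set \<Rightarrow> ('a \<Rightarrow> 'a \<Rightarrow> bool) \<Rightarrow> bool" where
  "simple_graph V E \<longleftrightarrow> finite V \<and> V \<noteq> {} \<and>
     (\<forall>u v. E u v \<longrightarrow> u \<in> V \<and> v \<in> V) \<and>
     (\<forall>u v. E u v \<longrightarrow> E v u) \<and> (\<forall>u. \<not> E u u)"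

definition is_walk :: "('a \<Rightarrow> 'a \<Rightarrow> bool) \<Rightarrow> 'a list \<Rightarrow> bool" where
  "is_walk E xs \<longleftrightarrow> xs \<noteq> [] \<and> (\<forall>i. Suc i < length xs \<longrightarrow> E (xs ! i) (xs ! Suc i))"

definition walk_of_len :: "('a \<Rightarrow> 'a \<Rightarrow> bool) \<Rightarrow> 'a \<Rightarrow> 'a \<Rightarrow> nat \<Rightarrow> bool" where
  "walk_of_len E u v k \<longleftrightarrow>
     (\<exists>xs. is_walk E xs \<and> hd xs = u \<and> last xs = v \<and> length xs = Suc k)"

definition connected_graph :: "'a set \<Rightarrow> ('a \<Rightarrow> 'a \<Rightarrow> bool) \<Rightarrow> bool" where
  "connected_graph V E \<longleftrightarrow> (\<forall>u\<in>V. \<forall>v\<in>V. \<exists>k. walk_of_len E u v k)"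

text \<open>Graph distance (meaningful for connected graphs).\<close>
definition gdist :: "('a \<Rightarrow> 'a \<Rightarrow> bool) \<Rightarrow> 'a \<Rightarrow> 'a \<Rightarrow> nat" where
  "gdist E u v = (LEAST k. walk_of_len E u v k)"

definition diameter :: "'a set \<Rightarrow> ('a \<Rightarrow> 'a \<Rightarrow> bool) \<Rightarrow> nat" where
  "diameter V E = Max {gdist E u v | u v. u \<in> V \<and> v \<in> V}"

definition degree :: "'a set \<Rightarrow> ('a \<Rightarrow> 'a \<Rightarrow> bool) \<Rightarrow> 'a \<Rightarrow> nat" where
  "degree V E v = card {w \<in> V. E v w}"

definition max_degree :: "'a set \<Rightarrow> ('a \<Rightarrow> 'a \<Rightarrow> bool) \<Rightarrow> nat" where
  "max_degree V E = Max (degree V E ` V)"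

end

theory Submission
  imports Defs
begin

text \<open>Around each vertex of A, the vertices at distance at most d - 2 form a ball, and a graph
  of maximum degree \<Delta> has at most 1 + \<Delta> + \<dots> + \<Delta>^(d - 2) vertices in such a ball (Moore bound).
  The |A| \<le> \<Delta> balls together therefore cover at most (\<Delta>^d - \<Delta>) / (\<Delta> - 1) vertices, and the
  hypothesis on n says exactly that this leaves at least two vertices uncovered, one of them
  different from v.\<close>

lemma walk_of_len_0D: "walk_of_len E u a 0 \<Longrightarrow> u = a"
  unfolding walk_of_len_def
  by (metis One_nat_def hd_conv_nth last_conv_nth length_0_conv diff_Suc_1 nat.distinct(1))

lemma walk_of_len_SucD:
  assumes "walk_of_len E u a (Suc k)"
  obtains x where "walk_of_len E u x k" and "E x a"
proof -
  obtain xs where xs: "is_walk E xs" "hd xs = u" "last xs = a" "length xs = Suc (Suc k)"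
    using assms unfolding walk_of_len_def by blast
  let ?ys = "butlast xs"
  have len: "length ?ys = Suc k"
    using xs(4) by simp
  then have ne: "?ys \<noteq> []"
    by (metis length_0_conv nat.distinct(1))
  have "is_walk E ?ys"
    using xs(1) len ne unfolding is_walk_def by (auto simp: nth_butlast)
  moreover have "hd ?ys = u"
    using xs(2) ne by (metis hd_append2 append_butlast_last_id xs(4) list.size(3) nat.distinct(1))
  moreover have "last ?ys = xs ! k"
    using len ne by (simp add: last_conv_nth nth_butlast)
  moreover have "E (xs ! k) a"
    using xs(1,3,4) unfolding is_walk_def
    by (metis lessI last_conv_nth list.size(3) nat.distinct(1) diff_Suc_1)
  ultimately show thesis
    using that len unfolding walk_of_len_def by blast
qed

lemma walk_of_len_gdist:
  assumes "connected_graph V E" and "u \<in> V" and "a \<in> V"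
  shows "walk_of_len E u a (gdist E u a)"
proof -
  have "\<exists>k. walk_of_len E u a k"
    using assms unfolding connected_graph_def by blast
  then show ?thesis
    unfolding gdist_def by (rule LeastI_ex)
qed

definition gball :: "'a set \<Rightarrow> ('a \<Rightarrow> 'a \<Rightarrow> bool) \<Rightarrow> 'a \<Rightarrow> nat \<Rightarrow> 'a set" where
  "gball V E a k = {u \<in> V. \<exists>j\<le>k. walk_of_len E u a j}"

lemma finite_gball: "finite V \<Longrightarrow> finite (gball V E a k)"
  unfolding gball_def by simp

lemma gball_Suc_subset:
  assumes "simple_graph V E"
  shows "gball V E a (Suc k) \<subseteq> insert a (\<Union>x\<in>{x \<in> V. E a x}. gball V E x k)"
proof
  fix u
  assume "u \<in> gball V E a (Suc k)"
  then obtain j where u: "u \<in> V" "j \<le> Suc k" "walk_of_len E u a j"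
    unfolding gball_def by blast
  show "u \<in> insert a (\<Union>x\<in>{x \<in> V. E a x}. gball V E x k)"
  proof (cases j)
    case 0
    then show ?thesis
      using u(3) walk_of_len_0D by auto
  next
    case (Suc i)
    with u(3) obtain x where x: "walk_of_len E u x i" "E x a"
      by (auto elim: walk_of_len_SucD)
    then have "x \<in> {x \<in> V. E a x}"
      using assms unfolding simple_graph_def by blast
    moreover have "u \<in> gball V E x k"
      unfolding gball_def using u(1,2) x(1) Suc by auto
    ultimately show ?thesis by blast
  qed
qed

lemma card_gball_le:
  assumes "simple_graph V E" and "\<And>x. x \<in> V \<Longrightarrow> degree V E x \<le> D" and "a \<in> V"
  shows "card (gball V E a k) \<le> (\<Sum>i\<le>k. D ^ i)"
  using \<open>a \<in> V\<close>
proof (induction k arbitrary: a)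
  case 0
  have "gball V E a 0 \<subseteq> {a}"
    unfolding gball_def by (auto dest: walk_of_len_0D)
  then show ?case
    using card_mono[of "{a}"] by simp
next
  case (Suc k)
  let ?N = "{x \<in> V. E a x}"
  have fin: "finite V"
    using assms(1) unfolding simple_graph_def by blast
  have "card (gball V E a (Suc k)) \<le> card (insert a (\<Union>x\<in>?N. gball V E x k))"
    using fin gball_Suc_subset[OF assms(1)] by (intro card_mono) (auto simp: finite_gball)
  also have "\<dots> \<le> Suc (card (\<Union>x\<in>?N. gball V E x k))"
    by (rule card_insert_le_m1) auto
  also have "card (\<Union>x\<in>?N. gball V E x k) \<le> (\<Sum>x\<in>?N. card (gball V E x k))"
    using fin by (intro card_UN_le) simp
  also have "\<dots> \<le> card ?N * (\<Sum>i\<le>k. D ^ i)"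
    using sum_bounded_above[of ?N "\<lambda>x. card (gball V E x k)"] Suc.IH by auto
  also have "\<dots> \<le> D * (\<Sum>i\<le>k. D ^ i)"
    using assms(2)[OF Suc.prems] unfolding degree_def by simp
  finally show ?case
    by (simp add: sum.atMost_Suc_shift sum_distrib_left del: sum.atMost_Suc)
qed

lemma degree_le_max_degree:
  assumes "simple_graph V E" and "x \<in> V"
  shows "degree V E x \<le> max_degree V E"
  using assms unfolding simple_graph_def max_degree_def by simp

lemma max_degree_less_card:
  assumes "simple_graph V E"
  shows "max_degree V E < card V"
proof -
  have fin: "finite V" and "V \<noteq> {}"
    using assms unfolding simple_graph_def by blast+
  then obtain w where w: "w \<in> V" "max_degree V E = degree V E w"
    unfolding max_degree_def by (metis (no_types, lifting) Max_in finite_imageI image_iff image_is_empty)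
  have "{x \<in> V. E w x} \<subseteq> V - {w}"
    using assms unfolding simple_graph_def by blast
  then have "degree V E w \<le> card (V - {w})"
    unfolding degree_def using fin by (intro card_mono) auto
  also have "\<dots> < card V"
    using card_Diff1_less[OF fin w(1)] .
  finally show ?thesis
    using w(2) by simp
qed

lemma two_le_of_power_minus_one_less:
  fixes D n d :: nat
  assumes "int D ^ d - 1 < int n * (int D - 1)" and "n \<ge> 1"
  shows "D \<ge> 2"
proof (rule ccontr)
  assume "\<not> D \<ge> 2"
  then consider "D = 0" | "D = 1" by linarith
  then show False
    using assms by cases (cases d; auto)+
qed

lemma union_size_less_of_power_minus_one_less:
  fixes D n d c :: nat
  assumes "int D ^ d - 1 < int n * (int D - 1)" and "D \<ge> 2" and "d \<ge> 2"
    and "c \<le> D * (\<Sum>i\<le>d - 2. D ^ i)"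
  shows "c + 1 < n"
proof -
  obtain m where d: "d = Suc (Suc m)"
    using assms(3) by (metis add_2_eq_Suc le_Suc_ex)
  have "int c \<le> int D * (\<Sum>i\<le>m. int D ^ i)"
    using assms(4) d
    unfolding of_nat_power[symmetric] of_nat_sum[symmetric] of_nat_mult[symmetric] of_nat_le_iff
    by simp
  then have "(int D - 1) * int c \<le> (int D - 1) * (int D * (\<Sum>i<d - 1. int D ^ i))"
    using assms(2) d by (intro mult_left_mono) (simp_all add: lessThan_Suc_atMost)
  also have "\<dots> = int D * (int D ^ (d - 1) - 1)"
    by (simp add: power_diff_1_eq)
  also have "\<dots> = int D ^ d - int D"
    using assms(3) by (cases d) (simp_all add: algebra_simps)
  finally have "(int D - 1) * (int c + 1) < (int D - 1) * int n"
    using assms(1) by (simp add: algebra_simps)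
  then show ?thesis
    using assms(2) by (simp add: mult_less_cancel_left)
qed

lemma exists_avoiding_of_card_less:
  assumes "finite V" and "finite B" and "card B + 1 < card V"
  obtains u where "u \<in> V" and "u \<notin> B" and "u \<noteq> v"
proof -
  have "card (insert v B) < card V"
    using assms(2,3) by (simp add: card_insert_if)
  then have "\<not> V \<subseteq> insert v B"
    using assms(2) card_mono[of "insert v B" V] by auto
  then show thesis
    using that by blast
qed

theorem mainTheorem14:
  fixes V :: "'a set" and E :: "'a \<Rightarrow> 'a \<Rightarrow> bool" and n d \<Delta> :: nat
    and v :: 'a and A :: "'a set"
  assumes "simple_graph V E"
    and "connected_graph V E"
    and "n = card V"
    and "d = diameter V E"
    and "\<Delta> = max_degree V E"
    and "(int \<Delta>) ^ d - 1 < int n * (int \<Delta> - 1)"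
    and "v \<in> V"
    and "A \<subseteq> V"
    and "card A \<le> \<Delta>"
  shows "\<exists>u\<in>V. u \<noteq> v \<and> (\<forall>a\<in>A. int (gdist E u a) > int d - 2)"
proof -
  have fin: "finite V"
    using assms(1) unfolding simple_graph_def by blast
  have "\<Delta> < n"
    using max_degree_less_card[OF assms(1)] assms(3,5) by simp
  then have two_le_\<Delta>: "\<Delta> \<ge> 2"
    using two_le_of_power_minus_one_less assms(6) by simp
  show ?thesis
  proof (cases "d \<ge> 2")
    case False
    have "card ({} :: 'a set) + 1 < card V"
      using \<open>\<Delta> < n\<close> two_le_\<Delta> assms(3) by simp
    then obtain u where "u \<in> V" "u \<noteq> v"
      by (rule exists_avoiding_of_card_less[OF fin finite.emptyI])
    moreover have "int d - 2 < int (gdist E u a)" for a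
      using False by simp
    ultimately show ?thesis by blast
  next
    case True
    define B where "B = (\<Union>a\<in>A. gball V E a (d - 2))"
    have finA: "finite A"
      using assms(8) fin finite_subset by blast
    have ball_le: "card (gball V E a (d - 2)) \<le> (\<Sum>i\<le>d - 2. \<Delta> ^ i)" if "a \<in> A" for a
      using card_gball_le[OF assms(1) degree_le_max_degree[OF assms(1)]] that assms(5,8) by blast
    have "card B \<le> (\<Sum>a\<in>A. card (gball V E a (d - 2)))"
      unfolding B_def using finA by (rule card_UN_le)
    also have "\<dots> \<le> card A * (\<Sum>i\<le>d - 2. \<Delta> ^ i)"
      using sum_bounded_above[OF ball_le] by simp
    also have "\<dots> \<le> \<Delta> * (\<Sum>i\<le>d - 2. \<Delta> ^ i)"
      using assms(9) by (rule mult_right_mono) simp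
    finally have "card B + 1 < card V"
      using union_size_less_of_power_minus_one_less[OF assms(6) two_le_\<Delta> True] assms(3) by simp
    moreover have "finite B"
      unfolding B_def using finA fin by (simp add: finite_gball)
    ultimately obtain u where u: "u \<in> V" "u \<notin> B" "u \<noteq> v"
      using exists_avoiding_of_card_less[OF fin] by metis
    have "int d - 2 < int (gdist E u a)" if "a \<in> A" for a
    proof -
      have "walk_of_len E u a (gdist E u a)"
        using walk_of_len_gdist[OF assms(2) u(1)] that assms(8) by blast
      then have "\<not> gdist E u a \<le> d - 2"
        using u(1,2) that unfolding B_def gball_def by blast
      then show ?thesis
        using True by linarith
    qed
    with u show ?thesis by blast
  qed
qed

end
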